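(* For every analytic set $S\subseteq(0;1)$ there is a solid closed set $A\subseteq 2^{\omega}$ such that $\operatorname{ran}\mathcal{D}_A=\{0,1\}\cup S$, and there is also a solid open set $A'\subseteq 2^{\omega}$ such that $\operatorname{ran}\mathcal{D}_{A'}=\{0,1\}\cup S$.
   Context: $2^{\omega}$ is the Cantor space of infinite binary sequences with the product topology; for a finite binary sequence $s$ let $N_s=\{x\in 2^\omega: s\subset x\}$. $\mu$ is the coin-tossing probability measure on $2^\omega$, i.e. the unique Borel probability measure with $\mu(N_s)=2^{-\mathrm{lh}(s)}$. For a measurable $A\subseteq 2^\omega$ and $z\in 2^\omega$, the density of $A$ at $z$ is $\mathcal{D}_A(z)=\lim_{n\to\infty}\mu(A\cap N_{z\restriction n})/\mu(N_{z\restriction n})$, defined only when the limit exists; $\operatorname{ran}\mathcal{D}_A$ is the set of values $\mathcal{D}_A(z)$ over all $z$ at which the limit exists. A point $z$ is blurry for $A$ if $\mathcal{D}_A(z)$ does not exist. $A$ is solid if no point of $2^\omega$ is blurry for $A$. *)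

theory Defs
  imports "HOL-Analysis.Analysis" "HOL-Probability.Probability"
begin

definition cantor_top :: "(nat \<Rightarrow> bool) topology" where
  "cantor_top = product_topology (\<lambda>_. discrete_topology (UNIV :: bool set)) UNIV"

definition coin :: "(nat \<Rightarrow> bool) measure" where
  "coin = PiM UNIV (\<lambda>_. measure_pmf (bernoulli_pmf (1/2)))"

definition cyl :: "(nat \<Rightarrow> bool) \<Rightarrow> nat \<Rightarrow> (nat \<Rightarrow> bool) set" where
  "cyl z n = {x. \<forall>i<n. x i = z i}"

definition dens_seq :: "(nat \<Rightarrow> bool) set \<Rightarrow> (nat \<Rightarrow> bool) \<Rightarrow> nat \<Rightarrow> real" where
  "dens_seq A z n = measure coin (A \<inter> cyl z n) / measure coin (cyl z n)"

definition has_density :: "(nat \<Rightarrow> bool) set \<Rightarrow> (nat \<Rightarrow> bool) \<Rightarrow> real \<Rightarrow> bool" where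
  "has_density A z d \<longleftrightarrow> dens_seq A z \<longlonglongrightarrow> d"

definition ran_density :: "(nat \<Rightarrow> bool) set \<Rightarrow> real set" where
  "ran_density A = {d. \<exists>z. has_density A z d}"

definition blurry :: "(nat \<Rightarrow> bool) set \<Rightarrow> (nat \<Rightarrow> bool) \<Rightarrow> bool" where
  "blurry A z \<longleftrightarrow> \<not> (\<exists>d. has_density A z d)"

definition solid :: "(nat \<Rightarrow> bool) set \<Rightarrow> bool" where
  "solid A \<longleftrightarrow> (\<forall>z. \<not> blurry A z)"

definition analytic_real :: "real set \<Rightarrow> bool" where
  "analytic_real S \<longleftrightarrow> S = {} \<or> (\<exists>f :: (nat \<Rightarrow> nat) \<Rightarrow> real. continuous_on UNIV f \<and> range f = S)"

end

theory Submission
  imports Defs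
begin

text \<open>
  A point of Cantor space is read as the unary code of a point \<open>x\<close> of Baire space, consecutive
  digits separated by blocks of zeros.  A one inside the block that follows the prefix \<open>t\<close> of \<open>x\<close>
  opens a cylinder in which \<open>A\<close> occupies a dyadic fraction within \<open>2 ^ - length t\<close> of
  \<open>f (t 0 0 \<dots>)\<close>; so \<open>A\<close> is open.  Along the code of \<open>x\<close> the density of \<open>A\<close> is an average of
  such fractions and tends to \<open>f x\<close> by continuity.  A point that leaves the code into an opened
  cylinder sees density \<open>0\<close> or \<open>1\<close>, and one that stops decoding reads zeros forever after some
  prefix \<open>t\<close> and sees density \<open>f (t 0 0 \<dots>)\<close>.  Hence \<open>ran D\<^sub>A = {0, 1} \<union> range f\<close> for every
  continuous \<open>f\<close> from Baire space to \<open>[0, 1]\<close>.  The closed set is the complement of the open set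
  built for \<open>1 - S\<close>, since complementation turns densities \<open>d\<close> into \<open>1 - d\<close>.
\<close>

lemma abs_midpoint_le:
  fixes x y c e1 e2 :: real
  assumes "\<bar>x - c\<bar> \<le> e1" and "\<bar>y - c\<bar> \<le> e2"
  shows "\<bar>(x + y) / 2 - c\<bar> \<le> (e1 + e2) / 2"
  using assms by (auto simp: abs_le_iff field_simps)

lemma prefix_chain_limit:
  fixes L :: "nat \<Rightarrow> 'a list"
  assumes chain: "\<And>n m. n \<le> m \<Longrightarrow> \<exists>w. L m = L n @ w"
    and unbounded: "\<And>M. \<exists>n. M \<le> length (L n)"
  obtains x where "\<And>n. map x [0..<length (L n)] = L n"
proof
  define x where "x i = L (SOME n. i < length (L n)) ! i" for i
  have nth_L: "L n ! i = x i" if "i < length (L n)" for n i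
  proof -
    let ?n = "SOME n. i < length (L n)"
    have "i < length (L ?n)"
      using that by (rule someI)
    moreover obtain w where "L ?n = L n @ w \<or> L n = L ?n @ w"
      using chain nat_le_linear by blast
    ultimately show ?thesis
      using that unfolding x_def by (auto simp: nth_append)
  qed
  show "map x [0..<length (L n)] = L n" for n
    by (rule nth_equalityI) (auto simp: nth_L)
qed

section \<open>Cylinders and relative measure\<close>

definition seq_prefix :: "(nat \<Rightarrow> bool) \<Rightarrow> nat \<Rightarrow> bool list" where
  "seq_prefix x n = map x [0..<n]"

definition cylinder :: "bool list \<Rightarrow> (nat \<Rightarrow> bool) set" where
  "cylinder u = {x. \<forall>i<length u. x i = u ! i}"

abbreviation fair_coin :: "nat \<Rightarrow> bool measure" where
  "fair_coin \<equiv> \<lambda>_. measure_pmf (bernoulli_pmf (1/2))"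

interpretation coin_product: product_prob_space fair_coin UNIV
  by unfold_locales

interpretation coin_space: prob_space coin
  unfolding coin_def by (rule coin_product.P.prob_space_axioms)

lemma space_coin [simp]: "space coin = UNIV"
  unfolding coin_def by (simp add: space_PiM)

lemma length_seq_prefix [simp]: "length (seq_prefix x n) = n"
  by (simp add: seq_prefix_def)

lemma nth_seq_prefix [simp]: "i < n \<Longrightarrow> seq_prefix x n ! i = x i"
  by (simp add: seq_prefix_def)

lemma seq_prefix_Suc: "seq_prefix x (Suc n) = seq_prefix x n @ [x n]"
  by (simp add: seq_prefix_def)

lemma seq_prefix_add: "seq_prefix x (m + d) = seq_prefix x m @ map x [m..<m + d]"
  unfolding seq_prefix_def upt_add_eq_append[OF le0] by simp

lemma take_seq_prefix: "n \<le> m \<Longrightarrow> take n (seq_prefix x m) = seq_prefix x n"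
  by (simp add: seq_prefix_def take_map min_def)

lemma in_cylinder_iff: "x \<in> cylinder u \<longleftrightarrow> seq_prefix x (length u) = u"
  by (auto simp: cylinder_def list_eq_iff_nth_eq)

lemma in_cylinder_seq_prefix: "x \<in> cylinder (seq_prefix x n)"
  by (simp add: in_cylinder_iff)

lemma cyl_eq_cylinder: "cyl z n = cylinder (seq_prefix z n)"
  unfolding cyl_def cylinder_def by auto

lemma cylinder_snoc: "cylinder (u @ [b]) = cylinder u \<inter> {x. x (length u) = b}"
  unfolding cylinder_def by (auto simp: nth_append less_Suc_eq)

lemma cylinder_eq_prod_emb:
  "cylinder u = prod_emb UNIV fair_coin {..<length u} (\<Pi>\<^sub>E i\<in>{..<length u}. {u ! i})"
proof -
  have "prod_emb UNIV fair_coin {..<length u} (\<Pi>\<^sub>E i\<in>{..<length u}. {u ! i})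
      = (\<Pi>\<^sub>E i\<in>UNIV. if i \<in> {..<length u} then {u ! i} else space (fair_coin i))"
    by (rule prod_emb_PiE) auto
  also have "\<dots> = cylinder u"
    by (auto simp: cylinder_def PiE_iff space_measure_pmf split: if_splits)
  finally show ?thesis
    by simp
qed

lemma sets_cylinder [measurable]: "cylinder u \<in> sets coin"
  unfolding cylinder_eq_prod_emb coin_def by (rule sets_PiM_I) auto

lemma measure_cylinder: "measure coin (cylinder u) = (1/2) ^ length u"
proof -
  have "emeasure coin (cylinder u) = (\<Prod>i<length u. emeasure (fair_coin i) {u ! i})"
    unfolding cylinder_eq_prod_emb coin_def by (rule coin_product.emeasure_PiM_emb) auto
  also have "\<dots> = (\<Prod>i<length u. ennreal (1/2))"
    by (rule prod.cong) (auto simp: emeasure_pmf_single)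
  also have "\<dots> = ennreal ((1/2) ^ length u)"
    by (subst prod_ennreal) auto
  finally show ?thesis
    by (simp add: measure_def)
qed

lemma sets_seq_prefix_pred: "{x. P (seq_prefix x n)} \<in> sets coin"
proof -
  have "{x. P (seq_prefix x n)} = (\<Union>u\<in>{u. length u = n \<and> P u}. cylinder u)"
    by (auto simp: in_cylinder_iff)
  moreover have "finite {u :: bool list. length u = n \<and> P u}"
    by (rule finite_subset[OF _ finite_lists_length_eq[of "UNIV :: bool set" n]]) auto
  ultimately show ?thesis
    by (auto intro: sets.finite_UN)
qed

lemma topspace_cantor_top [simp]: "topspace cantor_top = UNIV"
  unfolding cantor_top_def by (auto simp: PiE_iff)

lemma openin_cylinder: "openin cantor_top (cylinder u)"
proof (induction u rule: rev_induct)
  case Nil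
  show ?case
    using openin_topspace[of cantor_top] by (simp add: cylinder_def)
next
  case (snoc b u)
  have "openin cantor_top {x \<in> topspace cantor_top. x (length u) \<in> {b}}"
    unfolding cantor_top_def
    by (rule openin_continuous_map_preimage[OF continuous_map_product_projection]) auto
  with snoc show ?case
    by (simp add: cylinder_snoc openin_Int)
qed

definition cylinder_density :: "(nat \<Rightarrow> bool) set \<Rightarrow> bool list \<Rightarrow> real" where
  "cylinder_density A u = measure coin (A \<inter> cylinder u) * 2 ^ length u"

lemma dens_seq_eq_cylinder_density: "dens_seq A z = (\<lambda>n. cylinder_density A (seq_prefix z n))"
  by (simp add: fun_eq_iff dens_seq_def cylinder_density_def cyl_eq_cylinder measure_cylinder
      field_simps)

lemma cylinder_density_nonneg: "0 \<le> cylinder_density A u"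
  by (simp add: cylinder_density_def)

lemma cylinder_density_le_1: "cylinder_density A u \<le> 1"
proof -
  have "measure coin (A \<inter> cylinder u) \<le> (1/2) ^ length u"
    using coin_space.finite_measure_mono[of "A \<inter> cylinder u" "cylinder u"]
    by (simp add: measure_cylinder)
  then have "cylinder_density A u \<le> (1/2) ^ length u * 2 ^ length u"
    unfolding cylinder_density_def by (intro mult_right_mono) auto
  then show ?thesis
    by (simp add: power_mult_distrib[symmetric])
qed

lemma cylinder_density_eq_1: "cylinder u \<subseteq> A \<Longrightarrow> cylinder_density A u = 1"
  by (simp add: cylinder_density_def Int_absorb1 measure_cylinder power_mult_distrib[symmetric])

lemma cylinder_density_eq_0: "A \<inter> cylinder u = {} \<Longrightarrow> cylinder_density A u = 0"
  by (simp add: cylinder_density_def)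

lemma cylinder_density_split:
  assumes "A \<in> sets coin"
  shows "cylinder_density A u = (cylinder_density A (u @ [False]) + cylinder_density A (u @ [True])) / 2"
proof -
  have "A \<inter> cylinder u = (A \<inter> cylinder (u @ [False])) \<union> (A \<inter> cylinder (u @ [True]))"
    by (auto simp: cylinder_snoc)
  moreover have "(A \<inter> cylinder (u @ [False])) \<inter> (A \<inter> cylinder (u @ [True])) = {}"
    by (auto simp: cylinder_snoc)
  ultimately have "measure coin (A \<inter> cylinder u)
      = measure coin (A \<inter> cylinder (u @ [False])) + measure coin (A \<inter> cylinder (u @ [True]))"
    using assms by (simp add: coin_space.finite_measure_Union)
  then show ?thesis
    unfolding cylinder_density_def by (simp add: field_simps)
qed

lemma has_density_unique: "has_density A z d \<Longrightarrow> has_density A z d' \<Longrightarrow> d = d'"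
  unfolding has_density_def by (rule LIMSEQ_unique)

lemma has_density_eventually_const:
  assumes "\<And>m. n \<le> m \<Longrightarrow> cylinder_density A (seq_prefix z m) = d"
  shows "has_density A z d"
  unfolding has_density_def dens_seq_eq_cylinder_density
  by (rule tendsto_eventually) (use assms in \<open>auto simp: eventually_sequentially\<close>)

lemma solid_and_ran_density_eqI:
  assumes "\<And>z. \<exists>d\<in>T. has_density A z d" and "T \<subseteq> ran_density A"
  shows "solid A \<and> ran_density A = T"
proof
  show "solid A"
    using assms(1) by (auto simp: solid_def blurry_def)
  have "ran_density A \<subseteq> T"
    using assms(1) by (auto simp: ran_density_def dest: has_density_unique)
  then show "ran_density A = T"
    using assms(2) by blast
qed

lemma has_density_Compl:
  assumes "A \<in> sets coin"
  shows "has_density (- A) z d \<longleftrightarrow> has_density A z (1 - d)"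
proof -
  have "dens_seq (- A) z n = 1 - dens_seq A z n" for n
  proof -
    have "- A \<inter> cyl z n = cyl z n - A \<inter> cyl z n"
      by auto
    then have "measure coin (- A \<inter> cyl z n) = measure coin (cyl z n) - measure coin (A \<inter> cyl z n)"
      using assms by (simp add: coin_space.finite_measure_Diff cyl_eq_cylinder)
    moreover have "measure coin (cyl z n) > 0"
      by (simp add: cyl_eq_cylinder measure_cylinder)
    ultimately show ?thesis
      unfolding dens_seq_def by (simp add: diff_divide_distrib)
  qed
  then have "dens_seq (- A) z = (\<lambda>n. 1 - dens_seq A z n)"
    by auto
  moreover have "(\<lambda>n. 1 - dens_seq A z n) \<longlonglongrightarrow> d \<longleftrightarrow> dens_seq A z \<longlonglongrightarrow> 1 - d"
    using tendsto_diff[OF tendsto_const, of "\<lambda>n. 1 - dens_seq A z n" d sequentially 1]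
      tendsto_diff[OF tendsto_const, of "dens_seq A z" "1 - d" sequentially 1]
    by auto
  ultimately show ?thesis
    unfolding has_density_def by simp
qed

lemma solid_ran_density_Compl:
  assumes "A \<in> sets coin" and "solid A"
  shows "solid (- A)" and "ran_density (- A) = (\<lambda>d. 1 - d) ` ran_density A"
proof -
  show "solid (- A)"
    unfolding solid_def blurry_def
  proof
    fix z
    obtain d where "has_density A z d"
      using assms(2) by (auto simp: solid_def blurry_def)
    then have "has_density (- A) z (1 - d)"
      by (simp add: has_density_Compl[OF assms(1)])
    then show "\<not> \<not> (\<exists>d. has_density (- A) z d)"
      by blast
  qed
  show "ran_density (- A) = (\<lambda>d. 1 - d) ` ran_density A"
  proof (rule set_eqI)
    fix d :: real
    have "d = 1 - (1 - d)"
      by simp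
    then show "d \<in> ran_density (- A) \<longleftrightarrow> d \<in> (\<lambda>d. 1 - d) ` ran_density A"
      unfolding ran_density_def has_density_Compl[OF assms(1)] image_iff by auto
  qed
qed

section \<open>The coding automaton\<close>

text \<open>The automaton decodes a point of Baire space in unary: \<open>Count t i\<close> has decoded the digits
  \<open>t\<close> and read \<open>i\<close> zeros of the next one; a one fixes that digit as \<open>i\<close> and starts a block
  \<open>Pad t i k\<close> of \<open>pad_length t i\<close> zeros.  A one inside the block enters \<open>Dyadic p k\<close>: from then on
  the set occupies the first \<open>p\<close> (false before true) of the \<open>2 ^ k\<close> subcylinders of depth \<open>k\<close> of the
  current cylinder.  A one as the very first bit enters \<open>Dyadic 1 1\<close>, which realises the
  densities \<open>0\<close> and \<open>1\<close>.\<close>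

datatype state = Start | Count "nat list" nat | Pad "nat list" nat nat | Dyadic nat nat

definition pad_length :: "nat list \<Rightarrow> nat \<Rightarrow> nat" where
  "pad_length t j = length t + j + 1"

lemma pad_length_pos [simp]: "0 < pad_length t j"
  by (simp add: pad_length_def)

definition quota :: "(nat list \<Rightarrow> real) \<Rightarrow> nat list \<Rightarrow> nat \<Rightarrow> nat" where
  "quota a t j = nat \<lfloor>a t * 2 ^ pad_length t j\<rfloor>"

definition quota_value :: "(nat list \<Rightarrow> real) \<Rightarrow> nat list \<Rightarrow> nat \<Rightarrow> real" where
  "quota_value a t j = quota a t j / 2 ^ pad_length t j"

fun next_state :: "(nat list \<Rightarrow> real) \<Rightarrow> state \<Rightarrow> bool \<Rightarrow> state" where
  "next_state a Start b = (if b then Dyadic 1 1 else Count [] 0)"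
| "next_state a (Count t i) b = (if b then Pad t i 0 else Count t (Suc i))"
| "next_state a (Pad t j k) b = (if b then Dyadic (quota a t j) (pad_length t j)
      else if Suc k = pad_length t j then Count (t @ [j]) 0 else Pad t j (Suc k))"
| "next_state a (Dyadic p 0) b = Dyadic p 0"
| "next_state a (Dyadic p (Suc k)) b =
      (if b then Dyadic (p - min p (2 ^ k)) k else Dyadic (min p (2 ^ k)) k)"

definition state_of :: "(nat list \<Rightarrow> real) \<Rightarrow> bool list \<Rightarrow> state" where
  "state_of a u = foldl (next_state a) Start u"

definition code_set :: "(nat list \<Rightarrow> real) \<Rightarrow> (nat \<Rightarrow> bool) set" where
  "code_set a = {x. \<exists>n. state_of a (seq_prefix x n) = Dyadic 1 0}"

lemma state_of_Nil [simp]: "state_of a [] = Start"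
  by (simp add: state_of_def)

lemma state_of_snoc [simp]: "state_of a (u @ [b]) = next_state a (state_of a u) b"
  by (simp add: state_of_def)

lemma state_of_seq_prefix_Suc:
  "state_of a (seq_prefix z (Suc n)) = next_state a (state_of a (seq_prefix z n)) (z n)"
  by (simp add: seq_prefix_Suc)

lemma foldl_next_state_Dyadic_0: "foldl (next_state a) (Dyadic p 0) w = Dyadic p 0"
  by (induction w) auto

lemma state_of_append_Dyadic_0:
  "state_of a u = Dyadic p 0 \<Longrightarrow> state_of a (u @ w) = Dyadic p 0"
  by (simp add: state_of_def foldl_next_state_Dyadic_0)

lemma code_set_eq_Union: "code_set a = \<Union> (cylinder ` {u. state_of a u = Dyadic 1 0})"
proof (rule set_eqI)
  fix x
  show "x \<in> code_set a \<longleftrightarrow> x \<in> \<Union> (cylinder ` {u. state_of a u = Dyadic 1 0})"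
  proof
    assume "x \<in> code_set a"
    then obtain n where "state_of a (seq_prefix x n) = Dyadic 1 0"
      by (auto simp: code_set_def)
    then show "x \<in> \<Union> (cylinder ` {u. state_of a u = Dyadic 1 0})"
      using in_cylinder_seq_prefix[of x n] by blast
  next
    assume "x \<in> \<Union> (cylinder ` {u. state_of a u = Dyadic 1 0})"
    then obtain u where "state_of a u = Dyadic 1 0" and "x \<in> cylinder u"
      by blast
    then have "state_of a (seq_prefix x (length u)) = Dyadic 1 0"
      by (simp add: in_cylinder_iff)
    then show "x \<in> code_set a"
      unfolding code_set_def by blast
  qed
qed

lemma openin_code_set: "openin cantor_top (code_set a)"
  unfolding code_set_eq_Union by (auto intro!: openin_Union openin_cylinder)

lemma sets_code_set [measurable]: "code_set a \<in> sets coin"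
proof -
  have "code_set a = (\<Union>n. {x. state_of a (seq_prefix x n) = Dyadic 1 0})"
    by (auto simp: code_set_def)
  also have "\<dots> \<in> sets coin"
    by (intro sets.countable_UN) (auto intro: sets_seq_prefix_pred)
  finally show ?thesis .
qed

lemma mem_code_set_Dyadic_0:
  assumes u: "state_of a u = Dyadic p 0" and x: "x \<in> cylinder u"
  shows "x \<in> code_set a \<longleftrightarrow> p = 1"
proof
  assume "x \<in> code_set a"
  then obtain n where n: "state_of a (seq_prefix x n) = Dyadic 1 0"
    by (auto simp: code_set_def)
  have u_eq: "u = seq_prefix x (length u)"
    using x by (simp add: in_cylinder_iff)
  show "p = 1"
  proof (cases "n \<le> length u")
    case True
    then have "u = seq_prefix x n @ drop n u"
      by (metis u_eq append_take_drop_id take_seq_prefix)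
    then have "state_of a u = Dyadic 1 0"
      using state_of_append_Dyadic_0[OF n] by metis
    then show ?thesis
      using u by simp
  next
    case False
    then have "seq_prefix x n = u @ map x [length u..<n]"
      using u_eq seq_prefix_add[of x "length u" "n - length u"] by simp
    then show ?thesis
      using n state_of_append_Dyadic_0[OF u] by auto
  qed
next
  assume "p = 1"
  moreover have "seq_prefix x (length u) = u"
    using x by (simp add: in_cylinder_iff)
  ultimately have "state_of a (seq_prefix x (length u)) = Dyadic 1 0"
    using u by simp
  then show "x \<in> code_set a"
    unfolding code_set_def by blast
qed

fun is_Dyadic :: "state \<Rightarrow> bool" where
  "is_Dyadic (Dyadic p k) = True"
| "is_Dyadic _ = False"

fun decoded :: "state \<Rightarrow> nat list" where
  "decoded (Count t i) = t"
| "decoded (Pad t j k) = t"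
| "decoded _ = []"

lemma decoded_next_state:
  "\<not> is_Dyadic (next_state a s b) \<Longrightarrow> \<exists>w. decoded (next_state a s b) = decoded s @ w"
  by (cases "(a, s, b)" rule: next_state.cases) auto

lemma next_state_neq_Start: "next_state a s b \<noteq> Start"
  by (cases "(a, s, b)" rule: next_state.cases) auto

lemma state_of_append_Dyadic:
  "state_of a u = Dyadic p k \<Longrightarrow> \<exists>p'. state_of a (u @ w) = Dyadic p' (k - length w)"
proof (induction w rule: rev_induct)
  case (snoc b w)
  then obtain p' where "state_of a (u @ w) = Dyadic p' (k - length w)"
    by blast
  then show ?case
    by (cases "k - length w") (auto simp flip: append_assoc simp: Suc_diff_Suc numeral_2_eq_2)
qed simp

fun wf_state :: "state \<Rightarrow> bool" where
  "wf_state (Pad t j k) = (k < pad_length t j)"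
| "wf_state (Dyadic p k) = (p \<le> 2 ^ k)"
| "wf_state _ = True"

section \<open>Density estimates for the coding automaton\<close>

locale density_weights =
  fixes a :: "nat list \<Rightarrow> real"
  assumes a_nonneg: "\<And>t. 0 \<le> a t" and a_le_1: "\<And>t. a t \<le> 1"
begin

abbreviation code_density :: "bool list \<Rightarrow> real" where
  "code_density u \<equiv> cylinder_density (code_set a) u"

lemma quota_le: "quota a t j \<le> 2 ^ pad_length t j"
proof -
  have "a t * 2 ^ pad_length t j \<le> 1 * 2 ^ pad_length t j"
    by (intro mult_right_mono a_le_1) auto
  moreover have "of_int ((2::int) ^ pad_length t j) = (2::real) ^ pad_length t j"
    by simp
  ultimately have "a t * 2 ^ pad_length t j < of_int ((2::int) ^ pad_length t j) + 1"
    by linarith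
  then have "\<lfloor>a t * 2 ^ pad_length t j\<rfloor> \<le> 2 ^ pad_length t j"
    by (simp only: floor_le_iff)
  then show ?thesis
    unfolding quota_def by (simp add: nat_le_iff)
qed

lemma quota_value_error: "\<bar>quota_value a t j - a t\<bar> \<le> 1 / 2 ^ pad_length t j"
proof -
  let ?y = "a t * 2 ^ pad_length t j"
  have q: "real (quota a t j) = of_int \<lfloor>?y\<rfloor>"
    unfolding quota_def using a_nonneg[of t] by simp
  have "of_int \<lfloor>?y\<rfloor> / 2 ^ pad_length t j \<le> ?y / 2 ^ pad_length t j"
    by (intro divide_right_mono) auto
  then have "quota_value a t j \<le> a t"
    unfolding quota_value_def q by simp
  moreover have "(?y - 1) / 2 ^ pad_length t j \<le> of_int \<lfloor>?y\<rfloor> / 2 ^ pad_length t j"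
    by (intro divide_right_mono) (linarith, simp)
  then have "a t - 1 / 2 ^ pad_length t j \<le> quota_value a t j"
    unfolding quota_value_def q by (simp add: field_simps)
  ultimately show ?thesis
    by (simp add: abs_le_iff)
qed

lemma wf_state_of: "wf_state (state_of a u)"
proof (induction u rule: rev_induct)
  case (snoc b u)
  then show ?case
    by (cases "(a, state_of a u, b)" rule: next_state.cases) (auto simp: quota_le min_def)
qed simp

lemma code_density_Dyadic: "state_of a u = Dyadic p k \<Longrightarrow> code_density u = p / 2 ^ k"
proof (induction k arbitrary: u p)
  case 0
  have "p \<le> 1"
    using wf_state_of[of u] 0 by simp
  then consider "p = 0" | "p = 1"
    by linarith
  then show ?case
  proof cases
    case 1
    then have "code_set a \<inter> cylinder u = {}"
      using mem_code_set_Dyadic_0[OF 0] by auto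
    then show ?thesis
      using 1 by (simp add: cylinder_density_eq_0)
  next
    case 2
    then have "cylinder u \<subseteq> code_set a"
      using mem_code_set_Dyadic_0[OF 0] by auto
    then show ?thesis
      using 2 by (simp add: cylinder_density_eq_1)
  qed
next
  case (Suc k)
  have "code_density (u @ [False]) = min p (2 ^ k) / 2 ^ k"
    using Suc.IH[of "u @ [False]"] Suc.prems by simp
  moreover have "code_density (u @ [True]) = (p - min p (2 ^ k)) / 2 ^ k"
    using Suc.IH[of "u @ [True]"] Suc.prems by simp
  moreover have "code_density u = (code_density (u @ [False]) + code_density (u @ [True])) / 2"
    by (rule cylinder_density_split[OF sets_code_set])
  ultimately show ?case
    by (simp add: of_nat_diff add_divide_distrib[symmetric])
qed

lemma code_density_dist_le_1: "0 \<le> c \<Longrightarrow> c \<le> 1 \<Longrightarrow> \<bar>code_density u - c\<bar> \<le> 1"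
  using cylinder_density_nonneg[of "code_set a" u] cylinder_density_le_1[of "code_set a" u]
  by (auto simp: abs_le_iff)

lemma code_density_snoc_True_Pad:
  "state_of a u = Pad t j k \<Longrightarrow> code_density (u @ [True]) = quota_value a t j"
  using code_density_Dyadic[of "u @ [True]"] by (simp add: quota_value_def)

text \<open>Inside a padding block every one-branch carries density \<open>quota_value a t j\<close>, and the block
  ends in \<open>Count (t @ [j]) 0\<close>; the influence of the latter halves with every step back.\<close>
lemma code_density_Pad_aux:
  assumes count: "\<And>v. state_of a v = Count (t @ [j]) 0 \<Longrightarrow> \<bar>code_density v - c\<bar> \<le> B + D"
    and quota: "\<bar>quota_value a t j - c\<bar> \<le> B"
  shows "pad_length t j - k = Suc d \<Longrightarrow> state_of a u = Pad t j k \<Longrightarrow>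
    \<bar>code_density u - c\<bar> \<le> B + D / 2 ^ Suc d"
proof (induction d arbitrary: k u)
  case 0
  have "\<bar>code_density (u @ [False]) - c\<bar> \<le> B + D"
    using count 0 by simp
  moreover have "\<bar>code_density (u @ [True]) - c\<bar> \<le> B"
    using quota code_density_snoc_True_Pad[OF "0.prems"(2)] by simp
  ultimately have "\<bar>code_density u - c\<bar> \<le> ((B + D) + B) / 2"
    unfolding cylinder_density_split[OF sets_code_set, of a u] by (rule abs_midpoint_le)
  then show ?case
    by (simp add: field_simps)
next
  case (Suc d)
  then have "Suc k \<noteq> pad_length t j" and "pad_length t j - Suc k = Suc d"
    by auto
  then have "\<bar>code_density (u @ [False]) - c\<bar> \<le> B + D / 2 ^ Suc d"
    using Suc.IH[of "Suc k" "u @ [False]"] Suc.prems(2) by simp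
  moreover have "\<bar>code_density (u @ [True]) - c\<bar> \<le> B"
    using quota code_density_snoc_True_Pad[OF Suc.prems(2)] by simp
  ultimately have "\<bar>code_density u - c\<bar> \<le> ((B + D / 2 ^ Suc d) + B) / 2"
    unfolding cylinder_density_split[OF sets_code_set, of a u] by (rule abs_midpoint_le)
  then show ?case
    by (simp add: field_simps)
qed

lemma code_density_Pad:
  assumes "state_of a u = Pad t j k"
    and "\<And>v. state_of a v = Count (t @ [j]) 0 \<Longrightarrow> \<bar>code_density v - c\<bar> \<le> B + D"
    and "\<bar>quota_value a t j - c\<bar> \<le> B"
  shows "\<bar>code_density u - c\<bar> \<le> B + D / 2 ^ (pad_length t j - k)"
proof -
  have "k < pad_length t j"
    using wf_state_of[of u] assms(1) by simp
  then have "pad_length t j - k = Suc (pad_length t j - k - 1)"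
    by simp
  with code_density_Pad_aux[OF assms(2,3) this assms(1)] show ?thesis
    by simp
qed

text \<open>A counting state has a zero-branch that counts on and a one-branch that starts padding;
  unfolding \<open>J\<close> zero-steps leaves an error \<open>1 / 2 ^ J\<close>.\<close>
lemma code_density_Count_aux:
  assumes "0 \<le> B" and "0 \<le> c" and "c \<le> 1"
    and pad: "\<And>j v. i0 \<le> j \<Longrightarrow> state_of a v = Pad t j 0 \<Longrightarrow> \<bar>code_density v - c\<bar> \<le> B"
  shows "i0 \<le> i \<Longrightarrow> state_of a u = Count t i \<Longrightarrow> \<bar>code_density u - c\<bar> \<le> B + 1 / 2 ^ J"
proof (induction J arbitrary: i u)
  case 0
  then show ?case
    using code_density_dist_le_1[of c u] assms(1-3) by simp
next
  case (Suc J)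
  have "\<bar>code_density (u @ [False]) - c\<bar> \<le> B + 1 / 2 ^ J"
    using Suc.IH[of "Suc i" "u @ [False]"] Suc.prems by simp
  moreover have "\<bar>code_density (u @ [True]) - c\<bar> \<le> B"
    using pad[of i "u @ [True]"] Suc.prems by simp
  ultimately have "\<bar>code_density u - c\<bar> \<le> ((B + 1 / 2 ^ J) + B) / 2"
    unfolding cylinder_density_split[OF sets_code_set, of a u] by (rule abs_midpoint_le)
  then show ?case
    by (simp add: field_simps)
qed

lemma code_density_Count:
  assumes "0 \<le> B" and "0 \<le> c" and "c \<le> 1"
    and "\<And>j v. i0 \<le> j \<Longrightarrow> state_of a v = Pad t j 0 \<Longrightarrow> \<bar>code_density v - c\<bar> \<le> B"
    and "i0 \<le> i" and "state_of a u = Count t i"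
  shows "\<bar>code_density u - c\<bar> \<le> B"
proof (rule ccontr)
  assume "\<not> ?thesis"
  then obtain J where J: "(1/2 :: real) ^ J < \<bar>code_density u - c\<bar> - B"
    using real_arch_pow_inv[of "\<bar>code_density u - c\<bar> - B" "1/2"] by auto
  have "\<bar>code_density u - c\<bar> \<le> B + 1 / 2 ^ J"
    by (rule code_density_Count_aux[OF assms])
  with J show False
    by (simp add: power_one_over)
qed

lemma code_density_Pad_0_near:
  assumes "state_of a v = Pad t j 0"
  shows "\<bar>code_density v - a t\<bar> \<le> 1 / 2 ^ (length t + j)"
proof -
  have "\<bar>code_density w - a t\<bar> \<le> 1 / 2 ^ pad_length t j + 1" for w
    using code_density_dist_le_1[of "a t" w] a_nonneg a_le_1 by (simp add: add_increasing)
  then have "\<bar>code_density v - a t\<bar> \<le> 1 / 2 ^ pad_length t j + 1 / 2 ^ (pad_length t j - 0)"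
    by (rule code_density_Pad[OF assms _ quota_value_error])
  then show ?thesis
    by (simp add: pad_length_def)
qed

lemma code_density_Count_near:
  assumes "state_of a u = Count t i"
  shows "\<bar>code_density u - a t\<bar> \<le> 1 / 2 ^ (length t + i)"
proof (rule code_density_Count[OF _ a_nonneg a_le_1 _ order_refl assms])
  fix j v
  assume "i \<le> j" and "state_of a v = Pad t j 0"
  then have "\<bar>code_density v - a t\<bar> \<le> 1 / 2 ^ (length t + j)"
    by (simp add: code_density_Pad_0_near)
  also have "\<dots> \<le> 1 / 2 ^ (length t + i)"
    using \<open>i \<le> j\<close> by (intro divide_left_mono power_increasing) auto
  finally show "\<bar>code_density v - a t\<bar> \<le> 1 / 2 ^ (length t + i)" .
qed simp

lemma code_density_Count_dist:
  assumes "state_of a u = Count t i"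
  shows "\<bar>code_density u - c\<bar> \<le> \<bar>a t - c\<bar> + 1 / 2 ^ length t"
proof -
  have "\<bar>code_density u - a t\<bar> \<le> 1 / 2 ^ (length t + i)"
    by (rule code_density_Count_near[OF assms])
  also have "\<dots> \<le> 1 / 2 ^ length t"
    by (intro divide_left_mono power_increasing) auto
  finally show ?thesis
    by linarith
qed

lemma code_density_Pad_dist:
  assumes u: "state_of a u = Pad t j k"
  shows "\<bar>code_density u - c\<bar> \<le> max \<bar>a t - c\<bar> \<bar>a (t @ [j]) - c\<bar> + 1 / 2 ^ length t"
proof -
  let ?B = "max \<bar>a t - c\<bar> \<bar>a (t @ [j]) - c\<bar> + 1 / 2 ^ length t"
  have "1 / 2 ^ length (t @ [j]) \<le> (1 :: real) / 2 ^ length t"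
    by (intro divide_left_mono power_increasing) auto
  then have "\<bar>code_density v - c\<bar> \<le> ?B + 0" if "state_of a v = Count (t @ [j]) 0" for v
    using code_density_Count_dist[OF that, of c] by simp
  moreover have "1 / 2 ^ pad_length t j \<le> (1 :: real) / 2 ^ length t"
    by (intro divide_left_mono power_increasing) (auto simp: pad_length_def)
  then have "\<bar>quota_value a t j - c\<bar> \<le> ?B"
    using quota_value_error[of t j] by linarith
  ultimately show ?thesis
    using code_density_Pad[OF u] by fastforce
qed

section \<open>Densities along points\<close>

abbreviation path_state :: "(nat \<Rightarrow> bool) \<Rightarrow> nat \<Rightarrow> state" where
  "path_state z n \<equiv> state_of a (seq_prefix z n)"

lemma has_density_Dyadic_0:
  assumes "path_state z n = Dyadic p 0"
  shows "has_density (code_set a) z p"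
proof (rule has_density_eventually_const)
  fix m
  assume "n \<le> m"
  then have "path_state z m = Dyadic p 0"
    using state_of_append_Dyadic_0[OF assms] seq_prefix_add[of z n "m - n"] by simp
  then show "code_density (seq_prefix z m) = p"
    by (simp add: code_density_Dyadic)
qed

lemma has_density_Dyadic:
  assumes "path_state z n = Dyadic p k"
  shows "\<exists>d\<in>{0, 1}. has_density (code_set a) z d"
proof -
  obtain p' where p': "path_state z (n + k) = Dyadic p' 0"
    using state_of_append_Dyadic[OF assms, of "map z [n..<n + k]"] by (auto simp: seq_prefix_add)
  then have "p' \<le> 1"
    using wf_state_of[of "seq_prefix z (n + k)"] by simp
  then have "p' = 0 \<or> p' = 1"
    by linarith
  then show ?thesis
    using has_density_Dyadic_0[OF p'] by auto
qed

lemma path_state_neq_Start: "0 < m \<Longrightarrow> path_state z m \<noteq> Start"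
  by (cases m) (simp_all add: state_of_seq_prefix_Suc next_state_neq_Start)

lemma decoded_path_state_mono:
  assumes no_Dyadic: "\<And>n. \<not> is_Dyadic (path_state z n)"
  shows "n \<le> m \<Longrightarrow> \<exists>w. decoded (path_state z m) = decoded (path_state z n) @ w"
proof (induction m rule: dec_induct)
  case (step q)
  then obtain w where w: "decoded (path_state z q) = decoded (path_state z n) @ w"
    by blast
  have "\<not> is_Dyadic (next_state a (path_state z q) (z q))"
    using no_Dyadic[of "Suc q"] by (simp add: state_of_seq_prefix_Suc)
  then obtain w' where "decoded (path_state z (Suc q)) = decoded (path_state z q) @ w'"
    using decoded_next_state by (fastforce simp: state_of_seq_prefix_Suc)
  with w show ?case
    by auto
qed simp

lemma Pad_reaches_Count:
  assumes no_Dyadic: "\<And>n. \<not> is_Dyadic (path_state z n)" and pad: "path_state z n = Pad t j k"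
  shows "\<exists>n'. path_state z n' = Count (t @ [j]) 0"
proof -
  have "pad_length t j - k = Suc d \<Longrightarrow> path_state z n = Pad t j k \<Longrightarrow>
      \<exists>n'. path_state z n' = Count (t @ [j]) 0" for d n k
  proof (induction d arbitrary: n k)
    case 0
    moreover have "\<not> z n"
      using no_Dyadic[of "Suc n"] 0 by (auto simp: state_of_seq_prefix_Suc)
    ultimately have "path_state z (Suc n) = Count (t @ [j]) 0"
      by (simp add: state_of_seq_prefix_Suc)
    then show ?case
      by blast
  next
    case (Suc d)
    moreover have "\<not> z n"
      using no_Dyadic[of "Suc n"] Suc.prems by (auto simp: state_of_seq_prefix_Suc)
    ultimately have "path_state z (Suc n) = Pad t j (Suc k)" and "pad_length t j - Suc k = Suc d"
      by (simp_all add: state_of_seq_prefix_Suc)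
    then show ?case
      using Suc.IH by blast
  qed
  moreover have "k < pad_length t j"
    using wf_state_of[of "seq_prefix z n"] pad by simp
  ultimately show ?thesis
    using pad by (metis Suc_diff_Suc)
qed

lemma decoded_eventually_const:
  assumes no_Dyadic: "\<And>n. \<not> is_Dyadic (path_state z n)"
    and bounded: "\<And>n. length (decoded (path_state z n)) \<le> M"
  obtains n0 where "\<And>m. n0 \<le> m \<Longrightarrow> decoded (path_state z m) = decoded (path_state z n0)"
proof -
  let ?l = "\<lambda>n. length (decoded (path_state z n))"
  have fin: "finite (range ?l)"
    using bounded by (auto intro: finite_subset[of _ "{..M}"])
  obtain n0 where n0: "?l n0 = Max (range ?l)"
    using Max_in[OF fin] by auto
  show thesis
  proof
    fix m
    assume "n0 \<le> m"
    then obtain w where w: "decoded (path_state z m) = decoded (path_state z n0) @ w"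
      using decoded_path_state_mono[OF no_Dyadic] by blast
    moreover have "?l m \<le> ?l n0"
      using Max_ge[OF fin] n0 by auto
    ultimately show "decoded (path_state z m) = decoded (path_state z n0)"
      by simp
  qed
qed

lemma eventually_Count:
  assumes no_Dyadic: "\<And>n. \<not> is_Dyadic (path_state z n)"
    and bounded: "\<And>n. length (decoded (path_state z n)) \<le> M"
  obtains m0 t0 i0 where "\<And>d. path_state z (m0 + d) = Count t0 (i0 + d)"
proof -
  obtain n0 where n0: "\<And>m. n0 \<le> m \<Longrightarrow> decoded (path_state z m) = decoded (path_state z n0)"
    using decoded_eventually_const[OF assms] by blast
  let ?t0 = "decoded (path_state z n0)"
  have Count: "\<exists>i. path_state z m = Count ?t0 i" if "n0 < m" for m
  proof -
    have "\<not> (\<exists>t j k. path_state z m = Pad t j k)"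
    proof
      assume "\<exists>t j k. path_state z m = Pad t j k"
      then obtain t j k where pad: "path_state z m = Pad t j k"
        by blast
      then obtain n' where n': "path_state z n' = Count (t @ [j]) 0"
        using Pad_reaches_Count[OF no_Dyadic] by blast
      show False
      proof (cases "n' \<le> m")
        case True
        then show False
          using decoded_path_state_mono[OF no_Dyadic True] pad n' by auto
      next
        case False
        then show False
          using n0[of n'] n0[of m] \<open>n0 < m\<close> pad n' by simp
      qed
    qed
    moreover have "path_state z m \<noteq> Start"
      using path_state_neq_Start that by simp
    ultimately show ?thesis
      using no_Dyadic[of m] n0[of m] that by (cases "path_state z m") auto
  qed
  obtain i0 where i0: "path_state z (Suc n0) = Count ?t0 i0"
    using Count[of "Suc n0"] by auto
  have "path_state z (Suc n0 + d) = Count ?t0 (i0 + d)" for d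
  proof (induction d)
    case (Suc d)
    obtain i where "path_state z (Suc (Suc n0 + d)) = Count ?t0 i"
      using Count[of "Suc (Suc n0 + d)"] by auto
    with Suc show ?case
      by (auto simp: state_of_seq_prefix_Suc split: if_splits)
  qed (simp add: i0)
  then show thesis
    by (rule that)
qed

lemma has_density_eventually_Count:
  assumes "\<And>d. path_state z (m0 + d) = Count t0 (i0 + d)"
  shows "has_density (code_set a) z (a t0)"
proof -
  have "\<bar>code_density (seq_prefix z (d + m0)) - a t0\<bar> \<le> (1/2) ^ d" for d
  proof -
    have "\<bar>code_density (seq_prefix z (d + m0)) - a t0\<bar> \<le> 1 / 2 ^ (length t0 + (i0 + d))"
      using code_density_Count_near[OF assms[of d]] by (simp add: add.commute)
    also have "\<dots> \<le> 1 / 2 ^ d"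
      by (intro divide_left_mono power_increasing) auto
    finally show ?thesis
      by (simp add: power_one_over)
  qed
  then have "(\<lambda>d. code_density (seq_prefix z (d + m0)) - a t0) \<longlonglongrightarrow> 0"
    by (intro Lim_null_comparison[OF _ LIMSEQ_realpow_zero]) (auto intro: always_eventually)
  then have "(\<lambda>n. code_density (seq_prefix z n)) \<longlonglongrightarrow> a t0"
    by (rule LIMSEQ_offset[OF LIM_zero_cancel])
  then show ?thesis
    by (simp add: has_density_def dens_seq_eq_cylinder_density)
qed

definition prefix_error :: "(nat \<Rightarrow> nat) \<Rightarrow> real \<Rightarrow> nat \<Rightarrow> real" where
  "prefix_error x c m = \<bar>a (map x [0..<m]) - c\<bar> + (1/2) ^ m"

lemma prefix_error_tendsto_0:
  assumes "(\<lambda>m. a (map x [0..<m])) \<longlonglongrightarrow> c"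
  shows "prefix_error x c \<longlonglongrightarrow> 0"
proof -
  have "(\<lambda>m. \<bar>a (map x [0..<m]) - c\<bar>) \<longlonglongrightarrow> 0"
    using assms by (intro tendsto_rabs_zero LIM_zero)
  then have "(\<lambda>m. \<bar>a (map x [0..<m]) - c\<bar> + (1/2 :: real) ^ m) \<longlonglongrightarrow> 0 + 0"
    by (intro tendsto_add LIMSEQ_realpow_zero) auto
  then show ?thesis
    by (simp add: prefix_error_def[abs_def])
qed

lemma code_density_decoding_path:
  assumes no_Dyadic: "\<And>n. \<not> is_Dyadic (path_state z n)"
    and decodes: "\<And>n. map x [0..<length (decoded (path_state z n))] = decoded (path_state z n)"
    and "0 < n"
  shows "\<bar>code_density (seq_prefix z n) - c\<bar>
    \<le> prefix_error x c (length (decoded (path_state z n)))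
      + prefix_error x c (Suc (length (decoded (path_state z n))))"
proof -
  let ?l = "length (decoded (path_state z n))"
  have nonneg: "0 \<le> prefix_error x c m" for m
    by (simp add: prefix_error_def)
  consider (Count) t i where "path_state z n = Count t i" | (Pad) t j k where "path_state z n = Pad t j k"
    using no_Dyadic[of n] path_state_neq_Start[OF \<open>0 < n\<close>] by (cases "path_state z n") auto
  then show ?thesis
  proof cases
    case Count
    then have "prefix_error x c ?l = \<bar>a t - c\<bar> + 1 / 2 ^ length t"
      using decodes[of n] by (simp add: prefix_error_def power_one_over)
    then show ?thesis
      using code_density_Count_dist[OF Count, of c] nonneg[of "Suc ?l"] by linarith
  next
    case Pad
    then have "prefix_error x c ?l = \<bar>a t - c\<bar> + 1 / 2 ^ length t"
      using decodes[of n] by (simp add: prefix_error_def power_one_over)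
    moreover obtain n' where n': "path_state z n' = Count (t @ [j]) 0"
      using Pad_reaches_Count[OF no_Dyadic Pad] by blast
    then have "map x [0..<Suc ?l] = t @ [j]"
      using decodes[of n'] decodes[of n] Pad by simp
    then have "\<bar>a (t @ [j]) - c\<bar> \<le> prefix_error x c (Suc ?l)"
      by (simp add: prefix_error_def)
    ultimately show ?thesis
      using code_density_Pad_dist[OF Pad, of c] nonneg[of ?l] by linarith
  qed
qed

lemma has_density_decoding_path:
  assumes no_Dyadic: "\<And>n. \<not> is_Dyadic (path_state z n)"
    and decodes: "\<And>n. map x [0..<length (decoded (path_state z n))] = decoded (path_state z n)"
    and unbounded: "\<And>M. \<exists>n. M \<le> length (decoded (path_state z n))"
    and conv: "(\<lambda>m. a (map x [0..<m])) \<longlonglongrightarrow> c"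
  shows "has_density (code_set a) z c"
proof -
  define l where "l n = length (decoded (path_state z n))" for n
  have l: "filterlim l at_top sequentially"
    unfolding filterlim_at_top eventually_sequentially
  proof
    fix M
    obtain n where "M \<le> l n"
      using unbounded by (auto simp: l_def)
    moreover have "l n \<le> l m" if "n \<le> m" for m
      using decoded_path_state_mono[OF no_Dyadic that] by (auto simp: l_def)
    ultimately show "\<exists>n. \<forall>m\<ge>n. M \<le> l m"
      using order_trans by blast
  qed
  have "(\<lambda>n. prefix_error x c (l n)) \<longlonglongrightarrow> 0"
    by (rule filterlim_compose[OF prefix_error_tendsto_0[OF conv] l])
  moreover have "(\<lambda>n. prefix_error x c (Suc (l n))) \<longlonglongrightarrow> 0"
    by (rule filterlim_compose[OF prefix_error_tendsto_0[OF conv] filterlim_compose[OF filterlim_Suc l]])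
  ultimately have bound_tendsto_0:
      "(\<lambda>n. prefix_error x c (l n) + prefix_error x c (Suc (l n))) \<longlonglongrightarrow> 0"
    using tendsto_add by fastforce
  have "eventually (\<lambda>n. norm (code_density (seq_prefix z n) - c)
      \<le> prefix_error x c (l n) + prefix_error x c (Suc (l n))) sequentially"
    unfolding eventually_sequentially l_def
    using code_density_decoding_path[OF no_Dyadic decodes] by (auto intro!: exI[of _ 1])
  then have "(\<lambda>n. code_density (seq_prefix z n) - c) \<longlonglongrightarrow> 0"
    by (rule Lim_null_comparison[OF _ bound_tendsto_0])
  then show ?thesis
    by (simp add: has_density_def dens_seq_eq_cylinder_density LIM_zero_cancel)
qed

lemma ex_has_density_code_set:
  assumes conv: "\<And>x. (\<lambda>m. a (map x [0..<m])) \<longlonglongrightarrow> g x"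
  shows "\<exists>d \<in> {0, 1} \<union> range a \<union> range g. has_density (code_set a) z d"
proof (cases "\<exists>n. is_Dyadic (path_state z n)")
  case True
  then obtain n p k where "path_state z n = Dyadic p k"
    by (metis is_Dyadic.elims(2))
  then show ?thesis
    using has_density_Dyadic by blast
next
  case False
  then have no_Dyadic: "\<And>n. \<not> is_Dyadic (path_state z n)"
    by blast
  show ?thesis
  proof (cases "\<exists>M. \<forall>n. length (decoded (path_state z n)) \<le> M")
    case True
    then obtain m0 t0 i0 where "\<And>d. path_state z (m0 + d) = Count t0 (i0 + d)"
      using eventually_Count[OF no_Dyadic] by blast
    then show ?thesis
      using has_density_eventually_Count by blast
  next
    case False
    then have unbounded: "\<And>M. \<exists>n. M \<le> length (decoded (path_state z n))"
      by (meson nle_le)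
    obtain x where "\<And>n. map x [0..<length (decoded (path_state z n))] = decoded (path_state z n)"
      using prefix_chain_limit[OF decoded_path_state_mono[OF no_Dyadic] unbounded] by blast
    then show ?thesis
      using has_density_decoding_path[OF no_Dyadic _ unbounded conv] by blast
  qed
qed

fun code_bit :: "(nat \<Rightarrow> nat) \<Rightarrow> state \<Rightarrow> bool" where
  "code_bit x (Count t i) = (i = x (length t))"
| "code_bit x _ = False"

primrec code_states :: "(nat \<Rightarrow> nat) \<Rightarrow> nat \<Rightarrow> state" where
  "code_states x 0 = Start"
| "code_states x (Suc n) = next_state a (code_states x n) (code_bit x (code_states x n))"

definition code_point :: "(nat \<Rightarrow> nat) \<Rightarrow> nat \<Rightarrow> bool" where
  "code_point x n = code_bit x (code_states x n)"

lemma path_state_code_point: "path_state (code_point x) n = code_states x n"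
  by (induction n) (simp_all add: state_of_seq_prefix_Suc code_point_def seq_prefix_def)

fun follows :: "(nat \<Rightarrow> nat) \<Rightarrow> state \<Rightarrow> bool" where
  "follows x Start = True"
| "follows x (Count t i) = (map x [0..<length t] = t \<and> i \<le> x (length t))"
| "follows x (Pad t j k) = (map x [0..<length t] = t \<and> j = x (length t) \<and> k < pad_length t j)"
| "follows x (Dyadic p k) = False"

lemma follows_code_states: "follows x (code_states x n)"
proof (induction n)
  case (Suc n)
  then show ?case
    by (cases "code_states x n") (auto simp: pad_length_def)
qed simp

lemma has_density_code_point:
  assumes "(\<lambda>m. a (map x [0..<m])) \<longlonglongrightarrow> c"
  shows "has_density (code_set a) (code_point x) c"
proof (rule has_density_decoding_path[OF _ _ _ assms])
  show no_Dyadic: "\<not> is_Dyadic (path_state (code_point x) n)" for n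
    using follows_code_states[of x n] unfolding path_state_code_point
    by (cases "code_states x n") auto
  show "map x [0..<length (decoded (path_state (code_point x) n))]
      = decoded (path_state (code_point x) n)" for n
    using follows_code_states[of x n] unfolding path_state_code_point
    by (cases "code_states x n") auto
  show "\<exists>n. M \<le> length (decoded (path_state (code_point x) n))" for M
  proof (rule ccontr)
    assume "\<not> ?thesis"
    then have "length (decoded (path_state (code_point x) n)) \<le> M" for n
      by (meson nle_le)
    then obtain m0 t0 i0 where Count: "\<And>d. code_states x (m0 + d) = Count t0 (i0 + d)"
      using eventually_Count[OF no_Dyadic] unfolding path_state_code_point by blast
    have "follows x (code_states x (m0 + Suc (x (length t0))))"
      \<comment> \<open>but this counter has overshot the digit \<open>x (length t0)\<close>\<close>
      by (rule follows_code_states)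
    then show False
      unfolding Count by simp
  qed
qed

lemma has_density_code_set_1: "has_density (code_set a) (\<lambda>n. n = 0) 1"
proof -
  have "path_state (\<lambda>n. n = 0) 2 = Dyadic 1 0"
    by (simp add: seq_prefix_def numeral_2_eq_2 state_of_def)
  then show ?thesis
    using has_density_Dyadic_0 by fastforce
qed

lemma has_density_code_set_0: "has_density (code_set a) (\<lambda>n. True) 0"
proof -
  have "path_state (\<lambda>n. True) 2 = Dyadic 0 0"
    by (simp add: seq_prefix_def numeral_2_eq_2 state_of_def)
  then show ?thesis
    using has_density_Dyadic_0 by fastforce
qed

end

section \<open>Open and closed sets with a given density range\<close>

definition zero_extend :: "nat list \<Rightarrow> nat \<Rightarrow> nat" where
  "zero_extend t i = (if i < length t then t ! i else 0)"

lemma zero_extend_prefix_tendsto: "(\<lambda>m. zero_extend (map x [0..<m])) \<longlonglongrightarrow> x"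
proof -
  have "limitin (product_topology (\<lambda>i. euclidean) UNIV) (\<lambda>m. zero_extend (map x [0..<m])) x sequentially"
    unfolding limitin_componentwise
  proof (intro conjI ballI)
    fix i :: nat
    show "limitin euclidean (\<lambda>m. zero_extend (map x [0..<m]) i) (x i) sequentially"
      unfolding limitin_canonical_iff
      by (rule tendsto_eventually)
        (auto simp: eventually_sequentially zero_extend_def intro!: exI[of _ "Suc i"])
  qed simp_all
  then show ?thesis
    by (simp add: euclidean_product_topology)
qed

lemma exists_open_solid_range:
  fixes f :: "(nat \<Rightarrow> nat) \<Rightarrow> real"
  assumes "continuous_on UNIV f" and "\<And>y. 0 \<le> f y" and "\<And>y. f y \<le> 1"
  shows "\<exists>A. openin cantor_top A \<and> A \<in> sets coin \<and> solid A \<and> ran_density A = {0, 1} \<union> range f"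
proof -
  define a where "a t = f (zero_extend t)" for t
  interpret density_weights a
    by unfold_locales (simp_all add: a_def assms)
  have conv: "(\<lambda>m. a (map x [0..<m])) \<longlonglongrightarrow> f x" for x
    unfolding a_def
    by (rule continuous_on_tendsto_compose[OF assms(1) zero_extend_prefix_tendsto]) auto
  have "solid (code_set a) \<and> ran_density (code_set a) = {0, 1} \<union> range f"
  proof (rule solid_and_ran_density_eqI)
    show "\<exists>d \<in> {0, 1} \<union> range f. has_density (code_set a) z d" for z
      using ex_has_density_code_set[OF conv, of z] by (auto simp: a_def)
    show "{0, 1} \<union> range f \<subseteq> ran_density (code_set a)"
      using has_density_code_set_0 has_density_code_set_1 has_density_code_point[OF conv]
      by (auto simp: ran_density_def)
  qed
  then show ?thesis
    using openin_code_set sets_code_set by blast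
qed

lemma exists_open_solid_analytic:
  assumes "analytic_real S" and "S \<subseteq> {0..1}"
  obtains A where "openin cantor_top A" and "A \<in> sets coin" and "solid A"
    and "ran_density A = {0, 1} \<union> S"
proof (cases "S = {}")
  case True
  then show thesis
    using exists_open_solid_range[of "\<lambda>_. 0"] that by auto
next
  case False
  then obtain f :: "(nat \<Rightarrow> nat) \<Rightarrow> real" where "continuous_on UNIV f" and "range f = S"
    using assms(1) by (auto simp: analytic_real_def)
  moreover from this assms(2) have "f y \<in> {0..1}" for y
    by blast
  then have "0 \<le> f y" and "f y \<le> 1" for y
    by auto
  ultimately show thesis
    using exists_open_solid_range[of f] that by blast
qed

lemma analytic_real_image:
  assumes "analytic_real S" and "continuous_on UNIV g"
  shows "analytic_real (g ` S)"
proof -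
  have "range (g \<circ> f) = g ` S" and "continuous_on UNIV (g \<circ> f)"
    if "continuous_on UNIV f" and "range f = S" for f :: "(nat \<Rightarrow> nat) \<Rightarrow> real"
    using that continuous_on_compose[OF that(1) continuous_on_subset[OF assms(2)]]
    by (auto simp: image_comp)
  with assms(1) show ?thesis
    unfolding analytic_real_def by blast
qed

theorem theorem5p1:
  fixes S :: "real set"
  assumes "analytic_real S" and "S \<subseteq> {0<..<1}"
  shows "(\<exists>A. closedin cantor_top A \<and> solid A \<and> ran_density A = {0, 1} \<union> S)
       \<and> (\<exists>A'. openin cantor_top A' \<and> solid A' \<and> ran_density A' = {0, 1} \<union> S)"
proof
  have "S \<subseteq> {0..1}"
    using assms(2) by auto
  with assms(1) obtain A where "openin cantor_top A" and "solid A" and "ran_density A = {0, 1} \<union> S"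
    by (rule exists_open_solid_analytic)
  then show "\<exists>A'. openin cantor_top A' \<and> solid A' \<and> ran_density A' = {0, 1} \<union> S"
    by (intro exI[of _ A] conjI)
  let ?flip = "\<lambda>s :: real. 1 - s"
  have "analytic_real (?flip ` S)"
    by (rule analytic_real_image[OF assms(1)]) (intro continuous_on_diff continuous_on_const continuous_on_id)
  moreover have "?flip ` S \<subseteq> {0..1}"
    using assms(2) by auto
  ultimately obtain B where B: "openin cantor_top B" "B \<in> sets coin" "solid B"
    "ran_density B = {0, 1} \<union> ?flip ` S"
    by (rule exists_open_solid_analytic)
  have "ran_density (- B) = {0, 1} \<union> S"
    unfolding solid_ran_density_Compl(2)[OF B(2,3)] B(4) by (simp add: image_Un image_image insert_commute)
  moreover have "closedin cantor_top (- B)"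
    using B(1) by (simp add: closedin_def)
  ultimately show "\<exists>A. closedin cantor_top A \<and> solid A \<and> ran_density A = {0, 1} \<union> S"
    using solid_ran_density_Compl(1)[OF B(2,3)] by (intro exI[of _ "- B"] conjI)
qed

end
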